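(* Let $E$ be a Fréchet space, $E^*$ its topological dual with the weak$^*$ topology, $J=[a,b]$ with $a<b$, and $f,g:J\to E^*$ continuous. Then $$\int_a^b\big\{f(t)(\mu(t))+g(t)(\mu'(t))\big\}\,dt=0$$ for every $\mu\in C^1(J,E)$ with $\mu(a)=\mu(b)=0$ if and only if the map $h:J\to E^*$, $$h(t)=g(t)-\int_a^t f(s)\,ds,$$ is constant on $J$.
   Context: $C^1(J,E)$ denotes continuously differentiable curves $J\to E$. For a continuous $f:J\to E^*$, $\int_a^t f(s)\,ds$ denotes the element $l_t\in E^*$ with $l_t(e)=\int_a^t f(s)(e)\,ds$ for all $e\in E$ (this element exists). *)

theory Defs
  imports "HOL-Analysis.Analysis"
begin

text \<open>A Frechet space is modelled as a real vector space whose topology is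
generated by a countable separating family of seminorms p n (n :: nat), complete
with respect to that family.\<close>

definition seminorm :: "('a::real_vector \<Rightarrow> real) \<Rightarrow> bool" where
  "seminorm q \<longleftrightarrow> (\<forall>x. 0 \<le> q x) \<and> (\<forall>x y. q (x + y) \<le> q x + q y)
     \<and> (\<forall>c x. q (c *\<^sub>R x) = \<bar>c\<bar> * q x)"

definition fr_open :: "(nat \<Rightarrow> 'a::real_vector \<Rightarrow> real) \<Rightarrow> 'a set \<Rightarrow> bool" where
  "fr_open p U \<longleftrightarrow> (\<forall>x\<in>U. \<exists>N. \<exists>\<epsilon>>0. {y. \<forall>n\<le>N. p n (y - x) < \<epsilon>} \<subseteq> U)"

definition fr_topology :: "(nat \<Rightarrow> 'a::real_vector \<Rightarrow> real) \<Rightarrow> 'a topology" where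
  "fr_topology p = topology (fr_open p)"

definition frechet_space :: "(nat \<Rightarrow> 'a::real_vector \<Rightarrow> real) \<Rightarrow> bool" where
  "frechet_space p \<longleftrightarrow> (\<forall>n. seminorm (p n))
     \<and> (\<forall>x. (\<forall>n. p n x = 0) \<longrightarrow> x = 0)
     \<and> (\<forall>X :: nat \<Rightarrow> 'a. (\<forall>n. \<forall>\<epsilon>>0. \<exists>M. \<forall>i\<ge>M. \<forall>j\<ge>M. p n (X i - X j) < \<epsilon>)
          \<longrightarrow> (\<exists>L. limitin (fr_topology p) X L sequentially))"

definition dual :: "(nat \<Rightarrow> 'a::real_vector \<Rightarrow> real) \<Rightarrow> ('a \<Rightarrow> real) set" where
  "dual p = {l. linear l \<and> continuous_map (fr_topology p) euclideanreal l}"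

definition C1_curve :: "(nat \<Rightarrow> 'a::real_vector \<Rightarrow> real) \<Rightarrow> real \<Rightarrow> real \<Rightarrow>
    (real \<Rightarrow> 'a) \<Rightarrow> (real \<Rightarrow> 'a) \<Rightarrow> bool" where
  "C1_curve p a b \<mu> \<mu>' \<longleftrightarrow>
     (\<forall>t\<in>{a..b}. limitin (fr_topology p) (\<lambda>s. inverse (s - t) *\<^sub>R (\<mu> s - \<mu> t)) (\<mu>' t)
                    (at t within {a..b}))
     \<and> continuous_map (subtopology euclideanreal {a..b}) (fr_topology p) \<mu>'"

text \<open>Weak* integral: (prim f a t) e = integral over [a,t] of f s e.\<close>
definition prim :: "(real \<Rightarrow> 'a \<Rightarrow> real) \<Rightarrow> real \<Rightarrow> real \<Rightarrow> 'a \<Rightarrow> real" where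
  "prim f a t = (\<lambda>e. integral {a..t} (\<lambda>s. f s e))"

end

theory Submission
  imports Defs
begin

(*
  If the integral vanishes for all admissible \<mu>, testing with the curves t \<mapsto> \<phi> t *R e reduces
  the claim, for each e, to the scalar du Bois-Reymond lemma for t \<mapsto> f t e and t \<mapsto> g t e.

  Conversely, if h is constant then g t = g a + prim f a t, so the integrand is the derivative of
  t \<mapsto> (g a + prim f a t) (\<mu> t), and the fundamental theorem of calculus leaves the boundary
  values, which vanish. The product rule behind this derivative needs the primitives prim f a s
  to be bounded by one finite sum of seminorms uniformly in s. This comes from the uniform
  boundedness principle for the pointwise bounded family f ` {a..b}, proved by the Baire
  category argument in the complete space.
*)

section \<open>The seminorm topology\<close>

lemma seminorm_0: "seminorm q \<Longrightarrow> q 0 = 0"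
  using seminorm_def[of q] by (metis abs_0 mult_zero_left scaleR_zero_left)

lemma seminorm_nonneg: "seminorm q \<Longrightarrow> 0 \<le> q x"
  by (simp add: seminorm_def)

lemma seminorm_scaleR: "seminorm q \<Longrightarrow> q (c *\<^sub>R x) = \<bar>c\<bar> * q x"
  by (simp add: seminorm_def)

lemma seminorm_minus_commute: "seminorm q \<Longrightarrow> q (x - y) = q (y - x)"
  using seminorm_scaleR[of q "-1" "x - y"] by simp

lemma seminorm_triangle_diff: "seminorm q \<Longrightarrow> q (x - z) \<le> q (x - y) + q (y - z)"
  using seminorm_def[of q] by (metis diff_add_cancel add_diff_eq)

lemma frechet_space_seminorms: "frechet_space p \<Longrightarrow> \<forall>n. seminorm (p n)"
  by (simp add: frechet_space_def)

definition fr_ball :: "(nat \<Rightarrow> 'a::real_vector \<Rightarrow> real) \<Rightarrow> 'a \<Rightarrow> nat \<Rightarrow> real \<Rightarrow> 'a set" where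
  "fr_ball p x N e = {y. \<forall>n\<le>N. p n (y - x) < e}"

definition fr_cball :: "(nat \<Rightarrow> 'a::real_vector \<Rightarrow> real) \<Rightarrow> 'a \<Rightarrow> nat \<Rightarrow> real \<Rightarrow> 'a set" where
  "fr_cball p x N e = {y. \<forall>n\<le>N. p n (y - x) \<le> e}"

lemma fr_ball_mono:
  assumes "N \<le> N'" and "e' \<le> e"
  shows "fr_ball p x N' e' \<subseteq> fr_ball p x N e"
  using assms unfolding fr_ball_def by (smt (verit) le_trans mem_Collect_eq subsetI)

lemma fr_ball_subset_cball: "fr_ball p x N e \<subseteq> fr_cball p x N e"
  by (auto simp: fr_ball_def fr_cball_def less_imp_le)

lemma fr_cball_subset_ball: "e' < e \<Longrightarrow> fr_cball p x N e' \<subseteq> fr_ball p x N e"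
  by (fastforce simp: fr_ball_def fr_cball_def)

lemma fr_open_iff: "fr_open p U \<longleftrightarrow> (\<forall>x\<in>U. \<exists>N. \<exists>e>0. fr_ball p x N e \<subseteq> U)"
  by (simp add: fr_open_def fr_ball_def)

lemma istopology_fr_open: "istopology (fr_open p)"
  unfolding istopology_def fr_open_iff
proof (intro conjI allI impI ballI)
  fix S T x assume S: "\<forall>x\<in>S. \<exists>N. \<exists>e>0. fr_ball p x N e \<subseteq> S"
    and T: "\<forall>x\<in>T. \<exists>N. \<exists>e>0. fr_ball p x N e \<subseteq> T" and x: "x \<in> S \<inter> T"
  obtain N1 e1 N2 e2 where "e1 > 0" "fr_ball p x N1 e1 \<subseteq> S" "e2 > 0" "fr_ball p x N2 e2 \<subseteq> T"
    using S T x by blast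
  then have "fr_ball p x (max N1 N2) (min e1 e2) \<subseteq> S \<inter> T"
    using fr_ball_mono[of N1 "max N1 N2" "min e1 e2" e1 p x] fr_ball_mono[of N2 "max N1 N2" "min e1 e2" e2 p x]
    by auto
  then show "\<exists>N. \<exists>e>0. fr_ball p x N e \<subseteq> S \<inter> T"
    using \<open>e1 > 0\<close> \<open>e2 > 0\<close> by (meson min_less_iff_conj)
next
  fix \<K> x assume "\<forall>K\<in>\<K>. \<forall>x\<in>K. \<exists>N. \<exists>e>0. fr_ball p x N e \<subseteq> K" and "x \<in> \<Union>\<K>"
  then show "\<exists>N. \<exists>e>0. fr_ball p x N e \<subseteq> \<Union>\<K>"
    by (meson Union_iff subset_iff)
qed

lemma openin_fr_topology: "openin (fr_topology p) = fr_open p"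
  by (simp add: fr_topology_def istopology_fr_open)

lemma topspace_fr_topology [simp]: "topspace (fr_topology p) = UNIV"
proof -
  have "fr_open p UNIV"
    by (auto simp: fr_open_iff intro: exI[of _ 1])
  then show ?thesis
    by (metis openin_fr_topology openin_subset top.extremum_uniqueI)
qed

lemma centre_in_fr_ball: "\<forall>n. seminorm (p n) \<Longrightarrow> 0 < e \<Longrightarrow> x \<in> fr_ball p x N e"
  by (simp add: fr_ball_def seminorm_0)

lemma fr_open_fr_ball:
  assumes "\<forall>n. seminorm (p n)"
  shows "fr_open p (fr_ball p x N e)"
  unfolding fr_open_iff
proof
  fix y assume y: "y \<in> fr_ball p x N e"
  define d where "d = e - Max ((\<lambda>n. p n (y - x)) ` {..N})"
  have "d > 0"
    using y by (simp add: d_def fr_ball_def)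
  moreover have "fr_ball p y N d \<subseteq> fr_ball p x N e"
  proof
    fix z assume z: "z \<in> fr_ball p y N d"
    have "p n (z - x) < e" if "n \<le> N" for n
    proof -
      have "p n (z - x) \<le> p n (z - y) + p n (y - x)"
        using assms seminorm_triangle_diff by blast
      moreover have "p n (y - x) \<le> Max ((\<lambda>n. p n (y - x)) ` {..N})"
        using that by (intro Max_ge) auto
      moreover have "p n (z - y) < d"
        using z that by (simp add: fr_ball_def)
      ultimately show ?thesis
        by (simp add: d_def)
    qed
    then show "z \<in> fr_ball p x N e"
      by (simp add: fr_ball_def)
  qed
  ultimately show "\<exists>N'. \<exists>d>0. fr_ball p y N' d \<subseteq> fr_ball p x N e"
    by blast
qed

lemma limitin_fr_topology_iff:
  assumes sn: "\<forall>n. seminorm (p n)"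
  shows "limitin (fr_topology p) X L F \<longleftrightarrow> (\<forall>n. ((\<lambda>i. p n (X i - L)) \<longlongrightarrow> 0) F)"
proof
  assume lim: "limitin (fr_topology p) X L F"
  show "\<forall>n. ((\<lambda>i. p n (X i - L)) \<longlongrightarrow> 0) F"
  proof (intro allI tendstoI)
    fix n and e :: real assume "e > 0"
    then have "eventually (\<lambda>i. X i \<in> fr_ball p L n e) F"
      using lim fr_open_fr_ball[OF sn] centre_in_fr_ball[OF sn]
      unfolding limitin_def openin_fr_topology by blast
    then show "eventually (\<lambda>i. dist (p n (X i - L)) 0 < e) F"
      by (rule eventually_mono) (simp add: fr_ball_def seminorm_nonneg[OF sn[rule_format]])
  qed
next
  assume lim: "\<forall>n. ((\<lambda>i. p n (X i - L)) \<longlongrightarrow> 0) F"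
  show "limitin (fr_topology p) X L F"
    unfolding limitin_def openin_fr_topology
  proof (intro conjI allI impI)
    fix U assume "fr_open p U \<and> L \<in> U"
    then obtain N e where "e > 0" and U: "fr_ball p L N e \<subseteq> U"
      unfolding fr_open_iff by blast
    then have "\<forall>n\<in>{..N}. eventually (\<lambda>i. p n (X i - L) < e) F"
      using lim by (auto dest: order_tendstoD(2))
    then have "eventually (\<lambda>i. \<forall>n\<in>{..N}. p n (X i - L) < e) F"
      by (rule eventually_ball_finite[rotated]) simp
    then show "eventually (\<lambda>i. X i \<in> U) F"
      by (rule eventually_mono) (use U in \<open>auto simp: fr_ball_def\<close>)
  qed simp
qed

lemma atin_euclidean: "atin euclidean x = at x"
  by (rule filter_eq_iff[THEN iffD2]) (auto simp: eventually_atin eventually_at_topological)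

lemma continuous_map_scaleR_fr_topology:
  assumes sn: "\<forall>n. seminorm (p n)"
  shows "continuous_map euclideanreal (fr_topology p) (\<lambda>u. u *\<^sub>R e)"
  unfolding continuous_map_atin atin_euclidean limitin_fr_topology_iff[OF sn]
proof (intro ballI allI)
  fix v :: real and n
  have "((\<lambda>u. \<bar>u - v\<bar> * p n e) \<longlongrightarrow> \<bar>v - v\<bar> * p n e) (at v)"
    by (intro tendsto_intros)
  then show "((\<lambda>u. p n (u *\<^sub>R e - v *\<^sub>R e)) \<longlongrightarrow> 0) (at v)"
    using sn by (simp add: seminorm_scaleR flip: scaleR_diff_left)
qed

section \<open>Baire category and uniform boundedness\<close>

lemma frechet_nested_cballs_intersect:
  assumes fs: "frechet_space p"
    and N: "\<And>k. k \<le> Ns k" and e0: "es \<longlonglongrightarrow> 0" and pos: "\<And>k. 0 \<le> es k"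
    and nested: "\<And>k. fr_cball p (xs (Suc k)) (Ns (Suc k)) (es (Suc k)) \<subseteq> fr_cball p (xs k) (Ns k) (es k)"
  shows "\<exists>L. \<forall>k. L \<in> fr_cball p (xs k) (Ns k) (es k)"
proof -
  have sn: "\<forall>n. seminorm (p n)"
    using fs by (rule frechet_space_seminorms)
  have centre: "xs j \<in> fr_cball p (xs j) (Ns j) (es j)" for j
    using pos sn by (simp add: fr_cball_def seminorm_0)
  have close: "p n (xs j - xs k) \<le> es k" if "k \<le> j" "n \<le> Ns k" for j k n
  proof -
    have "fr_cball p (xs j) (Ns j) (es j) \<subseteq> fr_cball p (xs k) (Ns k) (es k)"
      using \<open>k \<le> j\<close> by (induction j rule: dec_induct) (use nested in blast)+
    then have "xs j \<in> fr_cball p (xs k) (Ns k) (es k)"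
      using centre by blast
    then show ?thesis
      using that by (simp add: fr_cball_def)
  qed
  have cauchy: "\<exists>M. \<forall>i\<ge>M. \<forall>j\<ge>M. p n (xs i - xs j) < \<epsilon>" if "\<epsilon> > 0" for n \<epsilon>
  proof -
    obtain M0 where "\<And>k. k \<ge> M0 \<Longrightarrow> es k < \<epsilon> / 2"
      using order_tendstoD(2)[OF e0, of "\<epsilon> / 2"] \<open>\<epsilon> > 0\<close> by (auto simp: eventually_sequentially)
    then have small: "es (max M0 n) < \<epsilon> / 2"
      by simp
    define M where "M = max M0 n"
    have "n \<le> Ns M"
      using N[of M] by (simp add: M_def)
    have "p n (xs i - xs j) < \<epsilon>" if "M \<le> i" "M \<le> j" for i j
    proof -
      have "p n (xs i - xs j) \<le> p n (xs i - xs M) + p n (xs j - xs M)"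
        using seminorm_triangle_diff seminorm_minus_commute sn by metis
      also have "\<dots> \<le> 2 * es M"
        using close[OF \<open>M \<le> i\<close> \<open>n \<le> Ns M\<close>] close[OF \<open>M \<le> j\<close> \<open>n \<le> Ns M\<close>] by simp
      finally show ?thesis
        using small by (simp add: M_def)
    qed
    then show ?thesis
      by blast
  qed
  obtain L where "limitin (fr_topology p) xs L sequentially"
    using fs cauchy unfolding frechet_space_def by blast
  then have lim: "(\<lambda>i. p n (xs i - L)) \<longlonglongrightarrow> 0" for n
    using limitin_fr_topology_iff[OF sn] by blast
  have "p n (L - xs k) \<le> es k" if "n \<le> Ns k" for n k
  proof (rule field_le_epsilon)
    fix \<epsilon> :: real assume "\<epsilon> > 0"
    obtain i0 where "\<And>i. i \<ge> i0 \<Longrightarrow> p n (xs i - L) < \<epsilon>"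
      using order_tendstoD(2)[OF lim \<open>\<epsilon> > 0\<close>] by (auto simp: eventually_sequentially)
    then obtain i where "i \<ge> k" "p n (xs i - L) < \<epsilon>"
      by (meson max.cobounded1 max.cobounded2)
    moreover have "p n (L - xs k) \<le> p n (xs i - L) + p n (xs i - xs k)"
      using seminorm_triangle_diff seminorm_minus_commute sn by metis
    ultimately show "p n (L - xs k) \<le> es k + \<epsilon>"
      using close[OF \<open>i \<ge> k\<close> that] by simp
  qed
  then show ?thesis
    by (auto simp: fr_cball_def)
qed

lemma fr_cball_avoiding_closed:
  assumes sn: "\<forall>n. seminorm (p n)" and A: "fr_open p (- A)"
    and not_sub: "\<not> fr_ball p x N e \<subseteq> A"
  shows "\<exists>x' N' e'. m \<le> N' \<and> 0 < e' \<and> e' \<le> e / 2 \<and> fr_cball p x' N' e' \<subseteq> fr_ball p x N e - A"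
proof -
  obtain x' where x': "x' \<in> fr_ball p x N e - A"
    using not_sub by blast
  have "fr_open p (fr_ball p x N e - A)"
    using openin_Int[of "fr_topology p"] fr_open_fr_ball[OF sn] A
    by (simp add: openin_fr_topology Diff_eq)
  then obtain N1 e1 where "e1 > 0" and sub: "fr_ball p x' N1 e1 \<subseteq> fr_ball p x N e - A"
    using x' unfolding fr_open_iff by blast
  have "e > 0"
    using x' sn by (auto simp: fr_ball_def intro: le_less_trans[OF seminorm_nonneg])
  define e' where "e' = min e1 e / 2"
  have "fr_cball p x' (max N1 m) e' \<subseteq> fr_ball p x' N1 e1"
    using fr_cball_subset_ball[of e' "min e1 e"] fr_ball_mono[of N1 "max N1 m" "min e1 e" e1]
      \<open>e1 > 0\<close> \<open>e > 0\<close> by (fastforce simp: e'_def)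
  then show ?thesis
    using sub \<open>e1 > 0\<close> \<open>e > 0\<close> by (intro exI[of _ x'] exI[of _ "max N1 m"] exI[of _ e']) (auto simp: e'_def)
qed

lemma fr_cballs_nested_avoiding:
  assumes sn: "\<forall>n. seminorm (p n)" and closed: "\<And>k. fr_open p (- A k)"
    and no_ball: "\<And>k x N e. 0 < e \<Longrightarrow> \<not> fr_ball p x N e \<subseteq> A k"
  obtains xs Ns es where "\<And>k. 0 < es k" "\<And>k. es k \<le> (1 / 2) ^ k" "\<And>k. k \<le> Ns k"
    "\<And>k. fr_cball p (xs (Suc k)) (Ns (Suc k)) (es (Suc k)) \<subseteq> fr_ball p (xs k) (Ns k) (es k) - A k"
proof -
  define P where "P k = (\<lambda>(x :: 'a, N :: nat, e :: real). k \<le> N \<and> 0 < e \<and> e \<le> (1 / 2) ^ k)"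
    for k :: nat
  define Q where "Q k = (\<lambda>(x, N, e) (x', N', e'). fr_cball p x' N' e' \<subseteq> fr_ball p x N e - A k)"
    for k :: nat
  have "\<exists>S :: nat \<Rightarrow> 'a \<times> nat \<times> real. \<forall>k. P k (S k) \<and> Q k (S k) (S (Suc k))"
  proof (rule dependent_nat_choice)
    show "\<exists>s. P 0 s"
      by (rule exI[of _ "(0, 0, 1)"]) (simp add: P_def)
  next
    fix s k assume "P k s"
    then obtain x N e where s: "s = (x, N, e)" "0 < e" "e \<le> (1 / 2) ^ k"
      by (auto simp: P_def)
    then obtain x' N' e' where "Suc k \<le> N'" "0 < e'" "e' \<le> e / 2"
      "fr_cball p x' N' e' \<subseteq> fr_ball p x N e - A k"
      using fr_cball_avoiding_closed[OF sn closed[of k] no_ball[OF \<open>0 < e\<close>, of x N k], of "Suc k"]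
      by blast
    then show "\<exists>s'. P (Suc k) s' \<and> Q k s s'"
      using s by (intro exI[of _ "(x', N', e')"]) (auto simp: P_def Q_def)
  qed
  then obtain S where S: "\<And>k. P k (S k) \<and> Q k (S k) (S (Suc k))"
    by blast
  show ?thesis
  proof
    show "0 < snd (snd (S k))" "snd (snd (S k)) \<le> (1 / 2) ^ k" "k \<le> fst (snd (S k))" for k
      using S[of k] by (auto simp: P_def split: prod.splits)
    show "fr_cball p (fst (S (Suc k))) (fst (snd (S (Suc k)))) (snd (snd (S (Suc k))))
        \<subseteq> fr_ball p (fst (S k)) (fst (snd (S k))) (snd (snd (S k))) - A k" for k
      using S[of k] by (auto simp: Q_def split: prod.splits)
  qed
qed

text \<open>Otherwise the centres of nested closed balls avoiding A 0, A 1, ... form a Cauchy sequence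
  whose limit lies in no A k.\<close>
lemma frechet_baire:
  fixes A :: "nat \<Rightarrow> 'a::real_vector set"
  assumes fs: "frechet_space p" and closed: "\<And>k. fr_open p (- A k)" and cover: "\<And>x. \<exists>k. x \<in> A k"
  shows "\<exists>k x N e. 0 < e \<and> fr_ball p x N e \<subseteq> A k"
proof (rule ccontr)
  assume "\<not> ?thesis"
  then have no_ball: "\<not> fr_ball p x N e \<subseteq> A k" if "0 < e" for k x N e
    using that by blast
  show False
  proof (rule fr_cballs_nested_avoiding[of p A, OF frechet_space_seminorms[OF fs] closed no_ball])
    fix xs Ns and es :: "nat \<Rightarrow> real"
    assume es: "\<And>k. 0 < es k" "\<And>k. es k \<le> (1 / 2) ^ k" and Ns: "\<And>k. k \<le> Ns k"
      and step: "\<And>k. fr_cball p (xs (Suc k)) (Ns (Suc k)) (es (Suc k))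
        \<subseteq> fr_ball p (xs k) (Ns k) (es k) - A k"
    have "es \<longlonglongrightarrow> 0"
      by (rule Lim_null_comparison[OF _ LIMSEQ_realpow_zero[of "1 / 2"]])
        (use es in \<open>simp_all add: less_imp_le\<close>)
    moreover have "fr_cball p (xs (Suc k)) (Ns (Suc k)) (es (Suc k)) \<subseteq> fr_cball p (xs k) (Ns k) (es k)"
      for k
      using step[of k] fr_ball_subset_cball[of p "xs k" "Ns k" "es k"] by blast
    ultimately obtain L where L: "\<And>k. L \<in> fr_cball p (xs k) (Ns k) (es k)"
      using frechet_nested_cballs_intersect[OF fs Ns] es(1) less_imp_le by blast
    obtain k where "L \<in> A k"
      using cover by blast
    then show False
      using L[of "Suc k"] step[of k] by blast
  qed
qed

lemma linear_bound_from_fr_ball: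
  assumes sn: "\<forall>n. seminorm (p n)" and l: "linear l" and "0 < e"
    and bound: "\<And>x. x \<in> fr_ball p x0 N e \<Longrightarrow> \<bar>l x\<bar> \<le> B"
  shows "\<bar>l y\<bar> \<le> 2 * B / e * (\<Sum>n\<le>N. p n y)"
proof -
  define S where "S = (\<Sum>n\<le>N. p n y)"
  have "S \<ge> 0"
    using sn by (simp add: S_def seminorm_nonneg sum_nonneg)
  have "\<bar>l y\<bar> \<le> 2 * B / e * (S + d)" if "d > 0" for d
  proof -
    define s where "s = e / (S + d)"
    have "s > 0"
      using \<open>e > 0\<close> \<open>d > 0\<close> \<open>S \<ge> 0\<close> by (simp add: s_def)
    have "p n (s *\<^sub>R y) < e" if "n \<le> N" for n
    proof -
      have "p n y \<le> S"
        unfolding S_def using that sn by (intro member_le_sum) (auto simp: seminorm_nonneg)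
      then have "s * p n y < s * (S + d)"
        using \<open>s > 0\<close> \<open>d > 0\<close> by simp
      also have "\<dots> = e"
        using \<open>d > 0\<close> \<open>S \<ge> 0\<close> by (simp add: s_def)
      finally show ?thesis
        using sn \<open>s > 0\<close> by (simp add: seminorm_scaleR)
    qed
    then have "\<bar>l x0 + s * l y\<bar> \<le> B"
      using bound[of "x0 + s *\<^sub>R y"] l by (simp add: fr_ball_def linear_add linear_scale)
    moreover have "\<bar>l x0\<bar> \<le> B"
      using bound centre_in_fr_ball[OF sn \<open>0 < e\<close>] by blast
    ultimately have "s * \<bar>l y\<bar> \<le> 2 * B"
      using \<open>s > 0\<close> by (simp add: abs_mult)
    then show ?thesis
      using \<open>s > 0\<close> \<open>e > 0\<close> \<open>d > 0\<close> \<open>S \<ge> 0\<close> by (simp add: s_def field_simps)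
  qed
  then have "eventually (\<lambda>d. \<bar>l y\<bar> \<le> 2 * B / e * (S + d)) (at_right 0)"
    by (auto simp: eventually_at_right_field intro: exI[of _ 1])
  moreover have "((\<lambda>d. 2 * B / e * (S + d)) \<longlongrightarrow> 2 * B / e * (S + 0)) (at_right 0)"
    by (intro tendsto_intros)
  ultimately show ?thesis
    unfolding S_def by (simp add: tendsto_lowerbound)
qed

text \<open>The sets where the family is bounded by k are closed and cover the space, so by the Baire
  property one of them contains a ball.\<close>
lemma uniform_boundedness:
  assumes fs: "frechet_space p" and dual: "L \<subseteq> dual p"
    and pointwise: "\<And>x. \<exists>B. \<forall>l\<in>L. \<bar>l x\<bar> \<le> B"
  shows "\<exists>C N. \<forall>l\<in>L. \<forall>y. \<bar>l y\<bar> \<le> C * (\<Sum>n\<le>N. p n y)"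
proof -
  have sn: "\<forall>n. seminorm (p n)"
    using fs by (rule frechet_space_seminorms)
  define A where "A k = {x. \<forall>l\<in>L. \<bar>l x\<bar> \<le> real k}" for k :: nat
  have "fr_open p (- A k)" for k
  proof -
    have "openin (fr_topology p) {x. real k < \<bar>l x\<bar>}" if "l \<in> L" for l
    proof -
      have l: "continuous_map (fr_topology p) euclideanreal l"
        using dual that by (auto simp: dual_def)
      have "open {u :: real. real k < \<bar>u\<bar>}"
        by (intro open_Collect_less continuous_on_const continuous_on_rabs continuous_on_id)
      then show ?thesis
        using openin_continuous_map_preimage[OF l, of "{u. real k < \<bar>u\<bar>}"] by simp
    qed
    then have "openin (fr_topology p) (\<Union>l\<in>L. {x. real k < \<bar>l x\<bar>})"
      by (intro openin_Union) auto
    moreover have "(\<Union>l\<in>L. {x. real k < \<bar>l x\<bar>}) = - A k"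
      by (auto simp: A_def not_le)
    ultimately show ?thesis
      by (simp add: openin_fr_topology)
  qed
  moreover have "\<exists>k. x \<in> A k" for x
  proof -
    obtain B where "\<forall>l\<in>L. \<bar>l x\<bar> \<le> B"
      using pointwise by blast
    then have "x \<in> A (nat \<lceil>B\<rceil>)"
      unfolding A_def using real_nat_ceiling_ge[of B] by (auto intro: order_trans)
    then show ?thesis ..
  qed
  ultimately obtain k x0 N e where "0 < e" "fr_ball p x0 N e \<subseteq> A k"
    using frechet_baire[OF fs] by blast
  then have "\<bar>l y\<bar> \<le> 2 * real k / e * (\<Sum>n\<le>N. p n y)" if "l \<in> L" for l y
    using that dual by (intro linear_bound_from_fr_ball[OF sn]) (auto simp: A_def dual_def)
  then show ?thesis
    by fast
qed

section \<open>Weak-star primitives and derivatives along C1 curves\<close>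

lemma linear_prim:
  assumes dual: "\<forall>r\<in>{a..b}. f r \<in> dual p" and cont: "\<forall>e. continuous_on {a..b} (\<lambda>r. f r e)"
    and "s \<le> b"
  shows "linear (prim f a s)"
proof
  have lin: "linear (f r)" if "r \<in> {a..s}" for r
    using dual that \<open>s \<le> b\<close> by (auto simp: dual_def)
  have int: "(\<lambda>r. f r e) integrable_on {a..s}" for e
    using \<open>s \<le> b\<close> by (intro integrable_continuous_interval continuous_on_subset[OF cont[rule_format]]) auto
  show "prim f a s (x + y) = prim f a s x + prim f a s y" for x y
  proof -
    have "prim f a s (x + y) = integral {a..s} (\<lambda>r. f r x + f r y)"
      unfolding prim_def by (rule integral_cong) (simp add: lin linear_add)
    then show ?thesis
      by (simp add: prim_def integral_add[OF int int])
  qed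
  show "prim f a s (c *\<^sub>R x) = c *\<^sub>R prim f a s x" for c x
  proof -
    have "prim f a s (c *\<^sub>R x) = integral {a..s} (\<lambda>r. c * f r x)"
      unfolding prim_def by (rule integral_cong) (simp add: lin linear_scale)
    then show ?thesis
      by (simp add: prim_def)
  qed
qed

lemma prim_has_real_derivative:
  assumes "continuous_on {a..b} (\<lambda>r. f r e)" and "t \<in> {a..b}"
  shows "((\<lambda>s. prim f a s e) has_real_derivative f t e) (at t within {a..b})"
  unfolding prim_def has_real_derivative_iff_has_vector_derivative
  by (rule integral_has_vector_derivative[OF assms])

lemma abs_prim_le:
  assumes "continuous_on {a..b} (\<lambda>r. f r e)" and "\<forall>r\<in>{a..b}. \<bar>f r e\<bar> \<le> B" and "s \<in> {a..b}"
  shows "\<bar>prim f a s e\<bar> \<le> B * (b - a)"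
proof -
  have "\<bar>prim f a s e\<bar> \<le> B * (s - a)"
    unfolding prim_def using assms
    by (intro integral_bound[THEN order_trans[OF eq_refl[OF real_norm_def[symmetric]]]])
      (auto elim: continuous_on_subset)
  also have "\<dots> \<le> B * (b - a)"
    using assms by (intro mult_left_mono) (auto intro: order_trans[OF abs_ge_zero])
  finally show ?thesis .
qed

lemma prim_uniformly_bounded:
  assumes fs: "frechet_space p" and dual: "\<forall>r\<in>{a..b}. f r \<in> dual p"
    and cont: "\<forall>e. continuous_on {a..b} (\<lambda>r. f r e)"
  shows "\<exists>C N. \<forall>s\<in>{a..b}. \<forall>y. \<bar>prim f a s y\<bar> \<le> C * (\<Sum>n\<le>N. p n y)"
proof -
  have "\<exists>B. \<forall>l\<in>f ` {a..b}. \<bar>l y\<bar> \<le> B" for y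
  proof -
    have "compact ((\<lambda>r. f r y) ` {a..b})"
      using cont by (intro compact_continuous_image) auto
    then obtain B where "\<forall>u\<in>(\<lambda>r. f r y) ` {a..b}. norm u \<le> B"
      using compact_imp_bounded bounded_iff by blast
    then show ?thesis
      by auto
  qed
  moreover have "f ` {a..b} \<subseteq> dual p"
    using dual by blast
  ultimately obtain C N where "\<forall>l\<in>f ` {a..b}. \<forall>y. \<bar>l y\<bar> \<le> C * (\<Sum>n\<le>N. p n y)"
    using uniform_boundedness[OF fs] by blast
  then have bound: "\<forall>r\<in>{a..b}. \<forall>y. \<bar>f r y\<bar> \<le> C * (\<Sum>n\<le>N. p n y)"
    by blast
  have "\<bar>prim f a s y\<bar> \<le> C * (b - a) * (\<Sum>n\<le>N. p n y)" if "s \<in> {a..b}" for s y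
    using abs_prim_le[of a b f y "C * (\<Sum>n\<le>N. p n y)" s] cont bound that by (simp add: algebra_simps)
  then show ?thesis
    by blast
qed

lemma C1_curve_scaleR:
  assumes sn: "\<forall>n. seminorm (p n)"
    and \<phi>: "\<And>t. t \<in> {a..b} \<Longrightarrow> (\<phi> has_real_derivative \<psi> t) (at t within {a..b})"
    and \<psi>: "continuous_on {a..b} \<psi>"
  shows "C1_curve p a b (\<lambda>t. \<phi> t *\<^sub>R e) (\<lambda>t. \<psi> t *\<^sub>R e)"
  unfolding C1_curve_def
proof (intro conjI ballI)
  have scale: "continuous_map euclideanreal (fr_topology p) (\<lambda>u. u *\<^sub>R e)"
    by (rule continuous_map_scaleR_fr_topology[OF sn])
  fix t assume "t \<in> {a..b}"
  then have "((\<lambda>s. (\<phi> s - \<phi> t) / (s - t)) \<longlongrightarrow> \<psi> t) (at t within {a..b})"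
    using \<phi> has_field_derivative_iff by blast
  then have "limitin (fr_topology p) (\<lambda>s. ((\<phi> s - \<phi> t) / (s - t)) *\<^sub>R e) (\<psi> t *\<^sub>R e) (at t within {a..b})"
    using continuous_map_limit[OF scale] by (simp add: o_def)
  then show "limitin (fr_topology p) (\<lambda>s. inverse (s - t) *\<^sub>R (\<phi> s *\<^sub>R e - \<phi> t *\<^sub>R e)) (\<psi> t *\<^sub>R e)
      (at t within {a..b})"
    by (simp add: divide_inverse mult.commute flip: scaleR_diff_left)
next
  show "continuous_map (top_of_set {a..b}) (fr_topology p) (\<lambda>t. \<psi> t *\<^sub>R e)"
    using continuous_map_compose[OF _ continuous_map_scaleR_fr_topology[OF sn], of _ \<psi>] \<psi>
    by (simp add: o_def)
qed

lemma C1_curve_dual_has_real_derivative: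
  assumes "l \<in> dual p" and "C1_curve p a b \<mu> \<mu>'" and "t \<in> {a..b}"
  shows "((\<lambda>s. l (\<mu> s)) has_real_derivative l (\<mu>' t)) (at t within {a..b})"
proof -
  have lin: "linear l" and cont: "continuous_map (fr_topology p) euclideanreal l"
    using assms(1) by (auto simp: dual_def)
  have "limitin (fr_topology p) (\<lambda>s. inverse (s - t) *\<^sub>R (\<mu> s - \<mu> t)) (\<mu>' t) (at t within {a..b})"
    using assms(2,3) by (simp add: C1_curve_def)
  then have "((\<lambda>s. l (inverse (s - t) *\<^sub>R (\<mu> s - \<mu> t))) \<longlongrightarrow> l (\<mu>' t)) (at t within {a..b})"
    using continuous_map_limit[OF cont] by (simp add: o_def)
  then show ?thesis
    unfolding has_field_derivative_iff using lin
    by (simp add: linear_scale linear_diff divide_inverse mult.commute)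
qed

text \<open>The difference quotients of \<mu> converge only in the seminorms; the bound on H by a single
  finite sum of seminorms, uniform in s, is what lets H s act on them.\<close>
lemma C1_curve_pairing_has_real_derivative:
  assumes sn: "\<forall>n. seminorm (p n)" and C1: "C1_curve p a b \<mu> \<mu>'" and t: "t \<in> {a..b}"
    and lin: "\<And>s. s \<in> {a..b} \<Longrightarrow> linear (H s)"
    and bound: "\<And>s y. s \<in> {a..b} \<Longrightarrow> \<bar>H s y\<bar> \<le> C * (\<Sum>n\<le>N. p n y)"
    and deriv: "\<And>y. ((\<lambda>s. H s y) has_real_derivative h y) (at t within {a..b})"
  shows "((\<lambda>s. H s (\<mu> s)) has_real_derivative H t (\<mu>' t) + h (\<mu> t)) (at t within {a..b})"
proof -
  define F where "F = at t within {a..b}"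
  define q where "q s = inverse (s - t) *\<^sub>R (\<mu> s - \<mu> t)" for s
  have "limitin (fr_topology p) q (\<mu>' t) F"
    using C1 t unfolding C1_curve_def q_def[abs_def] F_def by blast
  then have q: "((\<lambda>s. p n (q s - \<mu>' t)) \<longlongrightarrow> 0) F" for n
    using limitin_fr_topology_iff[OF sn] by blast
  have in_ab: "eventually (\<lambda>s. s \<in> {a..b}) F"
    by (simp add: F_def eventually_at_filter)
  have "((\<lambda>s. H s (q s - \<mu>' t)) \<longlongrightarrow> 0) F"
  proof (rule Lim_null_comparison)
    show "eventually (\<lambda>s. norm (H s (q s - \<mu>' t)) \<le> C * (\<Sum>n\<le>N. p n (q s - \<mu>' t))) F"
      using in_ab by (rule eventually_mono) (simp add: bound)
    show "((\<lambda>s. C * (\<Sum>n\<le>N. p n (q s - \<mu>' t))) \<longlongrightarrow> 0) F"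
      using q by (intro tendsto_mult_right_zero tendsto_null_sum)
  qed
  moreover have "((\<lambda>s. H s (\<mu>' t)) \<longlongrightarrow> H t (\<mu>' t)) F"
    using DERIV_continuous[OF deriv] by (simp add: F_def continuous_within)
  moreover have "((\<lambda>s. (H s (\<mu> t) - H t (\<mu> t)) / (s - t)) \<longlongrightarrow> h (\<mu> t)) F"
    using deriv unfolding has_field_derivative_iff F_def .
  ultimately have "((\<lambda>s. H s (q s - \<mu>' t) + H s (\<mu>' t) + (H s (\<mu> t) - H t (\<mu> t)) / (s - t))
      \<longlongrightarrow> 0 + H t (\<mu>' t) + h (\<mu> t)) F"
    by (intro tendsto_add)
  moreover have "eventually (\<lambda>s. H s (q s - \<mu>' t) + H s (\<mu>' t) + (H s (\<mu> t) - H t (\<mu> t)) / (s - t)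
      = (H s (\<mu> s) - H t (\<mu> t)) / (s - t)) F"
    using in_ab
  proof (rule eventually_mono)
    fix s assume "s \<in> {a..b}"
    then have "H s (q s - \<mu>' t) + H s (\<mu>' t) = (H s (\<mu> s) - H s (\<mu> t)) / (s - t)"
      using lin by (simp add: q_def linear_diff linear_scale divide_inverse mult.commute)
    then show "H s (q s - \<mu>' t) + H s (\<mu>' t) + (H s (\<mu> t) - H t (\<mu> t)) / (s - t)
        = (H s (\<mu> s) - H t (\<mu> t)) / (s - t)"
      by (simp add: add_divide_distrib[symmetric])
  qed
  ultimately show ?thesis
    unfolding has_field_derivative_iff F_def by (simp add: tendsto_cong)
qed

lemma has_integral_pairing_with_primitive:
  assumes fs: "frechet_space p" and "a \<le> b"
    and dual: "\<forall>r\<in>{a..b}. f r \<in> dual p" and cont: "\<forall>e. continuous_on {a..b} (\<lambda>r. f r e)"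
    and l: "l \<in> dual p" and C1: "C1_curve p a b \<mu> \<mu>'"
  shows "((\<lambda>t. f t (\<mu> t) + (l (\<mu>' t) + prim f a t (\<mu>' t)))
           has_integral l (\<mu> b) + prim f a b (\<mu> b) - l (\<mu> a)) {a..b}"
proof -
  have sn: "\<forall>n. seminorm (p n)"
    using fs by (rule frechet_space_seminorms)
  obtain C N where bound: "\<forall>s\<in>{a..b}. \<forall>y. \<bar>prim f a s y\<bar> \<le> C * (\<Sum>n\<le>N. p n y)"
    using prim_uniformly_bounded[OF fs dual cont] by blast
  have deriv: "((\<lambda>s. l (\<mu> s) + prim f a s (\<mu> s)) has_real_derivative
      l (\<mu>' t) + (prim f a t (\<mu>' t) + f t (\<mu> t))) (at t within {a..b})" if "t \<in> {a..b}" for t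
    using that cont bound linear_prim[OF dual cont]
    by (intro DERIV_add C1_curve_dual_has_real_derivative[OF l C1]
        C1_curve_pairing_has_real_derivative[OF sn C1] prim_has_real_derivative) auto
  have "((\<lambda>t. l (\<mu>' t) + (prim f a t (\<mu>' t) + f t (\<mu> t))) has_integral
      (l (\<mu> b) + prim f a b (\<mu> b)) - (l (\<mu> a) + prim f a a (\<mu> a))) {a..b}"
    using \<open>a \<le> b\<close> deriv
    by (intro fundamental_theorem_of_calculus) (simp_all add: has_real_derivative_iff_has_vector_derivative)
  then show ?thesis
    by (simp add: prim_def algebra_simps)
qed

section \<open>The du Bois-Reymond lemma\<close>

lemma has_integral_minus_mean:
  fixes H :: "real \<Rightarrow> real"
  assumes "a < b" and "H integrable_on {a..b}"
  shows "((\<lambda>t. H t - integral {a..b} H / (b - a)) has_integral 0) {a..b}"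
  using has_integral_diff[OF integrable_integral[OF assms(2)]
      has_integral_const_real[of "integral {a..b} H / (b - a)" a b]] assms(1)
  by simp

lemma zero_of_has_integral_square:
  fixes \<psi> :: "real \<Rightarrow> real"
  assumes "a < b" and "continuous_on {a..b} \<psi>" and "((\<lambda>t. \<psi> t * \<psi> t) has_integral 0) {a..b}"
  shows "\<forall>t\<in>{a..b}. \<psi> t = 0"
  using integral_eq_0_iff[of a b "\<lambda>t. \<psi> t * \<psi> t"] assms
  by (simp add: integral_unique continuous_on_mult)

lemma has_integral_parts_vanishing_boundary:
  fixes F :: "real \<Rightarrow> real"
  assumes "a \<le> b" and F: "continuous_on {a..b} F"
    and \<phi>: "\<And>t. t \<in> {a..b} \<Longrightarrow> (\<phi> has_real_derivative \<psi> t) (at t within {a..b})"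
    and "\<phi> a = 0" "\<phi> b = 0"
  shows "((\<lambda>t. F t * \<phi> t + integral {a..t} F * \<psi> t) has_integral 0) {a..b}"
proof -
  have "((\<lambda>t. integral {a..t} F * \<phi> t) has_real_derivative F t * \<phi> t + integral {a..t} F * \<psi> t)
      (at t within {a..b})" if "t \<in> {a..b}" for t
    using integral_has_vector_derivative[OF F that] \<phi>[OF that]
    by (auto intro!: derivative_eq_intros simp flip: has_real_derivative_iff_has_vector_derivative)
  then show ?thesis
    using fundamental_theorem_of_calculus[OF \<open>a \<le> b\<close>, of "\<lambda>t. integral {a..t} F * \<phi> t"]
    by (simp add: has_real_derivative_iff_has_vector_derivative \<open>\<phi> a = 0\<close> \<open>\<phi> b = 0\<close>)
qed

text \<open>Test with the primitive \<phi> of \<psi> = H - (mean of H), where H = G - \<integral>F;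
  an integration by parts turns the hypothesis into \<integral>\<psi>\<psi> = 0.\<close>
lemma du_bois_reymond:
  fixes F G :: "real \<Rightarrow> real"
  assumes "a < b" and F: "continuous_on {a..b} F" and G: "continuous_on {a..b} G"
    and vanish: "\<And>\<phi> \<psi>. (\<And>t. t \<in> {a..b} \<Longrightarrow> (\<phi> has_real_derivative \<psi> t) (at t within {a..b}))
      \<Longrightarrow> continuous_on {a..b} \<psi> \<Longrightarrow> \<phi> a = 0 \<Longrightarrow> \<phi> b = 0
      \<Longrightarrow> integral {a..b} (\<lambda>t. F t * \<phi> t + G t * \<psi> t) = 0"
  shows "\<forall>t\<in>{a..b}. G t - integral {a..t} F = G a"
proof -
  define H where "H t = G t - integral {a..t} F" for t
  define m where "m = integral {a..b} H / (b - a)"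
  define \<psi> where "\<psi> t = H t - m" for t
  define \<phi> where "\<phi> t = integral {a..t} \<psi>" for t
  have H: "continuous_on {a..b} H"
    unfolding H_def using F G by (intro continuous_intros indefinite_integral_continuous_1
        integrable_continuous_interval)
  then have \<psi>: "continuous_on {a..b} \<psi>"
    unfolding \<psi>_def by (intro continuous_intros)
  have \<phi>: "(\<phi> has_real_derivative \<psi> t) (at t within {a..b})" if "t \<in> {a..b}" for t
    unfolding \<phi>_def has_real_derivative_iff_has_vector_derivative
    by (rule integral_has_vector_derivative[OF \<psi> that])
  have \<psi>_int: "(\<psi> has_integral 0) {a..b}"
    unfolding \<psi>_def m_def using \<open>a < b\<close> integrable_continuous_interval[OF H]
    by (rule has_integral_minus_mean)
  then have "\<phi> b = 0"
    by (simp add: \<phi>_def integral_unique)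
  moreover have "\<phi> a = 0"
    by (simp add: \<phi>_def)
  ultimately have "integral {a..b} (\<lambda>t. F t * \<phi> t + G t * \<psi> t) = 0"
    and parts: "((\<lambda>t. F t * \<phi> t + integral {a..t} F * \<psi> t) has_integral 0) {a..b}"
    using vanish[OF \<phi> \<psi>] has_integral_parts_vanishing_boundary[OF _ F \<phi>] \<open>a < b\<close> by auto
  moreover have "(\<lambda>t. F t * \<phi> t + G t * \<psi> t) integrable_on {a..b}"
    using F G \<psi> DERIV_continuous_on[OF \<phi>]
    by (intro integrable_continuous_interval continuous_intros)
  ultimately have "((\<lambda>t. F t * \<phi> t + G t * \<psi> t) has_integral 0) {a..b}"
    using integrable_integral by fastforce
  from has_integral_diff[OF this parts]
  have "((\<lambda>t. H t * \<psi> t) has_integral 0) {a..b}"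
    by (simp add: H_def algebra_simps)
  from has_integral_diff[OF this has_integral_mult_right[OF \<psi>_int, of m]]
  have "((\<lambda>t. \<psi> t * \<psi> t) has_integral 0) {a..b}"
    by (simp add: \<psi>_def algebra_simps)
  then have "\<forall>t\<in>{a..b}. H t = m"
    using zero_of_has_integral_square[OF \<open>a < b\<close> \<psi>] by (simp add: \<psi>_def)
  moreover have "H a = G a"
    by (simp add: H_def)
  ultimately show ?thesis
    using \<open>a < b\<close> unfolding H_def by (metis atLeastAtMost_iff order.refl less_imp_le)
qed

section \<open>Vanishing of the first variation\<close>

lemma constant_of_vanishing_first_variation:
  assumes fs: "frechet_space p" and "a < b"
    and dual: "\<forall>t\<in>{a..b}. f t \<in> dual p" "\<forall>t\<in>{a..b}. g t \<in> dual p"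
    and cont: "\<forall>e. continuous_on {a..b} (\<lambda>t. f t e)" "\<forall>e. continuous_on {a..b} (\<lambda>t. g t e)"
    and vanish: "\<And>\<mu> \<mu>'. C1_curve p a b \<mu> \<mu>' \<Longrightarrow> \<mu> a = 0 \<Longrightarrow> \<mu> b = 0 \<Longrightarrow>
      integral {a..b} (\<lambda>t. f t (\<mu> t) + g t (\<mu>' t)) = 0"
    and "t \<in> {a..b}"
  shows "g t e - prim f a t e = g a e"
proof -
  have "integral {a..b} (\<lambda>t. f t e * \<phi> t + g t e * \<psi> t) = 0"
    if \<phi>: "\<And>t. t \<in> {a..b} \<Longrightarrow> (\<phi> has_real_derivative \<psi> t) (at t within {a..b})"
      and \<psi>: "continuous_on {a..b} \<psi>" and "\<phi> a = 0" "\<phi> b = 0" for \<phi> \<psi>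
  proof -
    have "C1_curve p a b (\<lambda>t. \<phi> t *\<^sub>R e) (\<lambda>t. \<psi> t *\<^sub>R e)"
      using fs \<phi> \<psi> by (intro C1_curve_scaleR frechet_space_seminorms)
    then have "integral {a..b} (\<lambda>t. f t (\<phi> t *\<^sub>R e) + g t (\<psi> t *\<^sub>R e)) = 0"
      using vanish \<open>\<phi> a = 0\<close> \<open>\<phi> b = 0\<close> by simp
    moreover have "integral {a..b} (\<lambda>t. f t (\<phi> t *\<^sub>R e) + g t (\<psi> t *\<^sub>R e))
        = integral {a..b} (\<lambda>t. f t e * \<phi> t + g t e * \<psi> t)"
      using dual by (intro integral_cong) (auto simp: dual_def linear_scale)
    ultimately show ?thesis
      by simp
  qed
  then have "\<forall>t\<in>{a..b}. g t e - integral {a..t} (\<lambda>r. f r e) = g a e"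
    using cont by (intro du_bois_reymond[OF \<open>a < b\<close>]) auto
  then show ?thesis
    using \<open>t \<in> {a..b}\<close> by (simp add: prim_def)
qed

lemma vanishing_first_variation_of_constant:
  assumes fs: "frechet_space p" and "a \<le> b"
    and dual: "\<forall>t\<in>{a..b}. f t \<in> dual p" "g a \<in> dual p"
    and cont: "\<forall>e. continuous_on {a..b} (\<lambda>t. f t e)"
    and g: "\<And>t y. t \<in> {a..b} \<Longrightarrow> g t y = g a y + prim f a t y"
    and \<mu>: "C1_curve p a b \<mu> \<mu>'" "\<mu> a = 0" "\<mu> b = 0"
  shows "integral {a..b} (\<lambda>t. f t (\<mu> t) + g t (\<mu>' t)) = 0"
proof -
  have "((\<lambda>t. f t (\<mu> t) + (g a (\<mu>' t) + prim f a t (\<mu>' t)))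
      has_integral g a (\<mu> b) + prim f a b (\<mu> b) - g a (\<mu> a)) {a..b}"
    by (rule has_integral_pairing_with_primitive[OF fs \<open>a \<le> b\<close> dual(1) cont dual(2) \<mu>(1)])
  moreover have "g a (\<mu> b) + prim f a b (\<mu> b) - g a (\<mu> a) = 0"
    using \<mu> linear_0[of "g a"] linear_0[OF linear_prim[OF dual(1) cont order.refl]] dual(2)
    by (simp add: dual_def)
  ultimately have "((\<lambda>t. f t (\<mu> t) + (g a (\<mu>' t) + prim f a t (\<mu>' t))) has_integral 0) {a..b}"
    by simp
  then have "((\<lambda>t. f t (\<mu> t) + g t (\<mu>' t)) has_integral 0) {a..b}"
    by (rule has_integral_eq[rotated]) (metis g)
  then show ?thesis
    by (rule integral_unique)
qed

theorem proposition5: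
  fixes p :: "nat \<Rightarrow> 'a::real_vector \<Rightarrow> real"
    and f g :: "real \<Rightarrow> 'a \<Rightarrow> real" and a b :: real
  assumes "frechet_space p"
    and "a < b"
    and "\<forall>t\<in>{a..b}. f t \<in> dual p" and "\<forall>t\<in>{a..b}. g t \<in> dual p"
    and "\<forall>e. continuous_on {a..b} (\<lambda>t. f t e)"
    and "\<forall>e. continuous_on {a..b} (\<lambda>t. g t e)"
  shows "(\<forall>\<mu> \<mu>'. C1_curve p a b \<mu> \<mu>' \<and> \<mu> a = 0 \<and> \<mu> b = 0 \<longrightarrow>
            integral {a..b} (\<lambda>t. f t (\<mu> t) + g t (\<mu>' t)) = 0)
     \<longleftrightarrow> (\<exists>c. \<forall>t\<in>{a..b}. (\<lambda>e. g t e - prim f a t e) = c)"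
  (is "?vanish \<longleftrightarrow> ?constant")
proof
  assume ?vanish
  then have "\<forall>t\<in>{a..b}. (\<lambda>e. g t e - prim f a t e) = g a"
    using constant_of_vanishing_first_variation[OF assms] by (simp add: fun_eq_iff)
  then show ?constant
    by blast
next
  assume ?constant
  then obtain c where c: "\<And>t. t \<in> {a..b} \<Longrightarrow> g t y - prim f a t y = c y" for y
    by (metis fun_cong)
  have g: "g t y = g a y + prim f a t y" if "t \<in> {a..b}" for t y
    using c[OF that, of y] c[of a y] \<open>a < b\<close> by (simp add: prim_def)
  have "g a \<in> dual p"
    using assms(2,4) by simp
  then show ?vanish
    using vanishing_first_variation_of_constant[OF assms(1) _ assms(3) _ assms(5) g] \<open>a < b\<close> by auto
qed

end
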